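(* If a simple protocol $\Pi$ with $m$ memory states is not parsimonious, then there exists a parsimonious protocol $\Pi'$ with at most $m$ memory states such that $U^R(\Pi)\le U^R(\Pi')$.
   Context: Setting. The state of nature is $\theta\in\Theta=\{H,L\}$ with prior $\Pr(\theta=H)=p\in(0,1)$. A sender privately observes $\theta$; a receiver does not. $S$ is a finite signal set; conditional on $\theta$, signals are i.i.d. with distribution $\pi_\theta$ on $S$, where $\pi_\theta(s)>0$ for all $s\in S,\theta\in\Theta$, and $\pi_H\neq\pi_L$. The receiver has a finite set of memory states $M$ and chooses a protocol $\Pi=(f,g,a)$: a transition function $f:M\times S\to\Delta(M)$ ($f(i,s)(j)$ is the probability of moving from memory state $i$ to $j$ after signal $s$), an initial distribution $g\in\Delta(M)$ of $m_0$, and an action rule $a:M\to[0,1]$ (probability of action $H$ if the game ends in that memory state). A sender strategy is $\sigma:M\times\Theta\to[0,1]$, the probability of stopping in the current memory state given $\theta$. Timing: $m_0\sim g$; in each period $t=0,1,\dots$, with current memory state $m_t$, the game ends if $m_t$ is absorbing ($f(m_t,s)(m_t)=1$ for all $s$); otherwise the sender stops with probability $\sigma(m_t,\theta)$, ending the game; if not stopped, a signal $s_t\sim\pi_\theta$ is generated and $m_{t+1}\sim f(m_t,s_t)$. When the game ends in state $m_t$ the receiver takes action $H$ with probability $a(m_t)$ and $L$ otherwise. The receiver's payoff is $1$ if the action equals $\theta$ and $0$ otherwise; the sender's payoff is $1$ if the action is $H$ and $0$ otherwise; there is no discounting; if the game never ends both get $0$. $U^S(\Pi,\sigma),U^R(\Pi,\sigma)$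 denote expected payoffs, $\mathrm{br}(\Pi)=\arg\sup_\sigma U^S(\Pi,\sigma)$ is the set of sender best responses, and $U^R(\Pi):=U^R(\Pi,\sigma)$ for $\sigma\in\mathrm{br}(\Pi)$. Since $\pi_\theta$ has full support, which transitions $i\to j$ have positive probability does not depend on $\theta$; the terms absorbing, transient, recurrent communicating class applied to $\Pi$ refer to the Markov chain on $M$ induced by $f$ with signals drawn from $\pi_\theta$ (sender never stopping), and mean the same for both $\theta$. A protocol is simple if it has exactly two absorbing memory states and all other memory states are transient. A protocol is parsimonious if (i) it has exactly two absorbing memory states, one in which $a=0$ and one in which $a=1$, and (ii) all other memory states are transient with $a=0$. *)

theory Defs
  imports Complex_Main
begin

datatype theta = H | L

text \<open>A protocol with n memory states, numbered 0..<n.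
  trans i s j = f(i,s)(j); init j = g(j); act i = a(i).\<close>
record 's protocol =
  nst   :: nat
  trans :: "nat \<Rightarrow> 's \<Rightarrow> nat \<Rightarrow> real"
  init  :: "nat \<Rightarrow> real"
  act   :: "nat \<Rightarrow> real"

definition valid_protocol :: "'s::finite protocol \<Rightarrow> bool" where
  "valid_protocol P \<longleftrightarrow> nst P \<ge> 1 \<and>
     (\<forall>i<nst P. \<forall>s. (\<forall>j<nst P. trans P i s j \<ge> 0) \<and> (\<Sum>j<nst P. trans P i s j) = 1) \<and>
     (\<forall>j<nst P. init P j \<ge> 0) \<and> (\<Sum>j<nst P. init P j) = 1 \<and>
     (\<forall>i<nst P. 0 \<le> act P i \<and> act P i \<le> 1)"

definition kernel :: "(theta \<Rightarrow> 's::finite \<Rightarrow> real) \<Rightarrow> 's protocol \<Rightarrow> theta \<Rightarrow> nat \<Rightarrow> nat \<Rightarrow> real" where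
  "kernel \<pi> P \<theta> i j = (\<Sum>s\<in>UNIV. \<pi> \<theta> s * trans P i s j)"

definition absorbing :: "'s protocol \<Rightarrow> nat \<Rightarrow> bool" where
  "absorbing P i \<longleftrightarrow> (\<forall>s. trans P i s i = 1)"

text \<open>Mass of paths started at i that have not yet returned to i, after t+1 steps.\<close>
fun taboo :: "(theta \<Rightarrow> 's::finite \<Rightarrow> real) \<Rightarrow> 's protocol \<Rightarrow> theta \<Rightarrow> nat \<Rightarrow> nat \<Rightarrow> nat \<Rightarrow> real" where
  "taboo \<pi> P \<theta> i 0 j = kernel \<pi> P \<theta> i j"
| "taboo \<pi> P \<theta> i (Suc t) j =
     (\<Sum>k<nst P. if k = i then 0 else taboo \<pi> P \<theta> i t k * kernel \<pi> P \<theta> k j)"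

definition return_prob :: "(theta \<Rightarrow> 's::finite \<Rightarrow> real) \<Rightarrow> 's protocol \<Rightarrow> theta \<Rightarrow> nat \<Rightarrow> real" where
  "return_prob \<pi> P \<theta> i = (\<Sum>t. taboo \<pi> P \<theta> i t i)"

definition transient :: "(theta \<Rightarrow> 's::finite \<Rightarrow> real) \<Rightarrow> 's protocol \<Rightarrow> theta \<Rightarrow> nat \<Rightarrow> bool" where
  "transient \<pi> P \<theta> i \<longleftrightarrow> return_prob \<pi> P \<theta> i < 1"

definition simple :: "(theta \<Rightarrow> 's::finite \<Rightarrow> real) \<Rightarrow> 's protocol \<Rightarrow> bool" where
  "simple \<pi> P \<longleftrightarrow> card {i. i < nst P \<and> absorbing P i} = 2 \<and>
     (\<forall>i<nst P. \<not> absorbing P i \<longrightarrow> (\<forall>\<theta>. transient \<pi> P \<theta> i))"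

definition parsimonious :: "(theta \<Rightarrow> 's::finite \<Rightarrow> real) \<Rightarrow> 's protocol \<Rightarrow> bool" where
  "parsimonious \<pi> P \<longleftrightarrow> (\<exists>h l. h < nst P \<and> l < nst P \<and> h \<noteq> l \<and>
     {i. i < nst P \<and> absorbing P i} = {h, l} \<and> act P h = 1 \<and> act P l = 0 \<and>
     (\<forall>i<nst P. i \<noteq> h \<and> i \<noteq> l \<longrightarrow> (\<forall>\<theta>. transient \<pi> P \<theta> i) \<and> act P i = 0))"

text \<open>Sender strategy: sigma i theta = probability of stopping in memory state i given theta.\<close>
definition valid_strategy :: "'s protocol \<Rightarrow> (nat \<Rightarrow> theta \<Rightarrow> real) \<Rightarrow> bool" where
  "valid_strategy P \<sigma> \<longleftrightarrow> (\<forall>i<nst P. \<forall>\<theta>. 0 \<le> \<sigma> i \<theta> \<and> \<sigma> i \<theta> \<le> 1)"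

text \<open>alive t j: probability that the game has not ended before period t and m_t = j.\<close>
fun alive :: "(theta \<Rightarrow> 's::finite \<Rightarrow> real) \<Rightarrow> 's protocol \<Rightarrow> (nat \<Rightarrow> theta \<Rightarrow> real) \<Rightarrow> theta \<Rightarrow> nat \<Rightarrow> nat \<Rightarrow> real" where
  "alive \<pi> P \<sigma> \<theta> 0 j = init P j"
| "alive \<pi> P \<sigma> \<theta> (Suc t) j =
     (\<Sum>i<nst P. if absorbing P i then 0 else alive \<pi> P \<sigma> \<theta> t i * (1 - \<sigma> i \<theta>) * kernel \<pi> P \<theta> i j)"

definition ends :: "(theta \<Rightarrow> 's::finite \<Rightarrow> real) \<Rightarrow> 's protocol \<Rightarrow> (nat \<Rightarrow> theta \<Rightarrow> real) \<Rightarrow> theta \<Rightarrow> nat \<Rightarrow> nat \<Rightarrow> real" where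
  "ends \<pi> P \<sigma> \<theta> t i = (if absorbing P i then alive \<pi> P \<sigma> \<theta> t i else alive \<pi> P \<sigma> \<theta> t i * \<sigma> i \<theta>)"

definition prob_actH :: "(theta \<Rightarrow> 's::finite \<Rightarrow> real) \<Rightarrow> 's protocol \<Rightarrow> (nat \<Rightarrow> theta \<Rightarrow> real) \<Rightarrow> theta \<Rightarrow> real" where
  "prob_actH \<pi> P \<sigma> \<theta> = (\<Sum>t. \<Sum>i<nst P. ends \<pi> P \<sigma> \<theta> t i * act P i)"

definition prob_actL :: "(theta \<Rightarrow> 's::finite \<Rightarrow> real) \<Rightarrow> 's protocol \<Rightarrow> (nat \<Rightarrow> theta \<Rightarrow> real) \<Rightarrow> theta \<Rightarrow> real" where
  "prob_actL \<pi> P \<sigma> \<theta> = (\<Sum>t. \<Sum>i<nst P. ends \<pi> P \<sigma> \<theta> t i * (1 - act P i))"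

definition US :: "real \<Rightarrow> (theta \<Rightarrow> 's::finite \<Rightarrow> real) \<Rightarrow> 's protocol \<Rightarrow> (nat \<Rightarrow> theta \<Rightarrow> real) \<Rightarrow> real" where
  "US p \<pi> P \<sigma> = p * prob_actH \<pi> P \<sigma> H + (1 - p) * prob_actH \<pi> P \<sigma> L"

definition UR :: "real \<Rightarrow> (theta \<Rightarrow> 's::finite \<Rightarrow> real) \<Rightarrow> 's protocol \<Rightarrow> (nat \<Rightarrow> theta \<Rightarrow> real) \<Rightarrow> real" where
  "UR p \<pi> P \<sigma> = p * prob_actH \<pi> P \<sigma> H + (1 - p) * prob_actL \<pi> P \<sigma> L"

definition br :: "real \<Rightarrow> (theta \<Rightarrow> 's::finite \<Rightarrow> real) \<Rightarrow> 's protocol \<Rightarrow> (nat \<Rightarrow> theta \<Rightarrow> real) set" where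
  "br p \<pi> P = {\<sigma>. valid_strategy P \<sigma> \<and> (\<forall>\<sigma>'. valid_strategy P \<sigma>' \<longrightarrow> US p \<pi> P \<sigma>' \<le> US p \<pi> P \<sigma>)}"

definition URP :: "real \<Rightarrow> (theta \<Rightarrow> 's::finite \<Rightarrow> real) \<Rightarrow> 's protocol \<Rightarrow> real" where
  "URP p \<pi> P = UR p \<pi> P (SOME \<sigma>. \<sigma> \<in> br p \<pi> P)"

end

theory Submission
  imports Defs "HOL-Analysis.Analysis"
begin

text \<open>Let \<open>\<sigma>\<close> be the sender best response selected in the simple protocol \<open>P\<close>, whose absorbing
  states are \<open>h\<close> and \<open>l\<close>. The parsimonious protocol \<open>Q\<close> lives on the same states: from a transient
  state \<open>i\<close> it jumps, with probability \<open>\<sigma>(i,H)\<close>, to a lottery between \<open>h\<close> (action \<open>H\<close>) and \<open>l\<close>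
  (action \<open>L\<close>) that reproduces the action taken at \<open>i\<close>, and otherwise moves as \<open>P\<close> does, with the
  absorbing states of \<open>P\<close> replaced by lotteries reproducing their actions. If the sender never
  stops in \<open>Q\<close>, type \<open>H\<close> gets action \<open>H\<close> exactly as often as under \<open>\<sigma>\<close> in \<open>P\<close>, hence at least as
  often under a best response to \<open>Q\<close>. Any strategy \<open>\<tau>\<close> of type \<open>L\<close> in \<open>Q\<close> is mimicked in \<open>P\<close> by
  stopping with probability \<open>1 - (1 - \<tau>) (1 - \<sigma>(\<sqdot>,H))\<close>, which yields action \<open>H\<close> at least as often
  (stopping in a transient state of \<open>Q\<close> yields \<open>L\<close>), hence at most as often as \<open>\<sigma>\<close> does. Both
  effects raise the receiver's payoff.

  The analytic input is that a simple protocol ends almost surely, since by a renewal argument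
  every transient state is visited finitely often in expectation; and that the sender's payoff is
  continuous on the compact space of strategies, so that best responses exist.\<close>

section \<open>The Markov chain of a protocol\<close>

abbreviation never_stop :: "nat \<Rightarrow> theta \<Rightarrow> real" where
  "never_stop \<equiv> \<lambda>_ _. 0"

locale protocol_chain =
  fixes \<pi> :: "theta \<Rightarrow> 's::finite \<Rightarrow> real" and P :: "'s protocol"
  assumes signal_nonneg: "\<And>\<theta> s. 0 \<le> \<pi> \<theta> s"
    and signal_sum: "\<And>\<theta>. (\<Sum>s\<in>UNIV. \<pi> \<theta> s) = 1"
    and valid: "valid_protocol P"
begin

abbreviation "n \<equiv> nst P"
abbreviation "K \<equiv> kernel \<pi> P"

lemma nst_ge_1: "1 \<le> n"
  using valid by (simp add: valid_protocol_def)

lemma trans_nonneg: "i < n \<Longrightarrow> j < n \<Longrightarrow> 0 \<le> trans P i s j"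
  using valid by (simp add: valid_protocol_def)

lemma trans_sum_1: "i < n \<Longrightarrow> (\<Sum>j<n. trans P i s j) = 1"
  using valid by (simp add: valid_protocol_def)

lemma trans_le_1: "i < n \<Longrightarrow> j < n \<Longrightarrow> trans P i s j \<le> 1"
  using member_le_sum[of j "{..<n}" "trans P i s"] trans_nonneg trans_sum_1 by simp

lemma init_nonneg: "j < n \<Longrightarrow> 0 \<le> init P j"
  using valid by (simp add: valid_protocol_def)

lemma init_sum_1: "(\<Sum>j<n. init P j) = 1"
  using valid by (simp add: valid_protocol_def)

lemma act_nonneg: "i < n \<Longrightarrow> 0 \<le> act P i"
  using valid by (simp add: valid_protocol_def)

lemma act_le_1: "i < n \<Longrightarrow> act P i \<le> 1"
  using valid by (simp add: valid_protocol_def)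

lemma kernel_nonneg: "i < n \<Longrightarrow> j < n \<Longrightarrow> 0 \<le> K \<theta> i j"
  unfolding kernel_def by (intro sum_nonneg mult_nonneg_nonneg signal_nonneg trans_nonneg)

lemma kernel_sum_1:
  assumes i: "i < n"
  shows "(\<Sum>j<n. K \<theta> i j) = 1"
proof -
  have "(\<Sum>j<n. K \<theta> i j) = (\<Sum>s\<in>UNIV. \<pi> \<theta> s * (\<Sum>j<n. trans P i s j))"
    unfolding kernel_def by (subst sum.swap) (simp add: sum_distrib_left)
  also have "\<dots> = 1" using trans_sum_1[OF i] signal_sum by simp
  finally show ?thesis .
qed

lemma trans_absorbing_other:
  assumes "i < n" "absorbing P i" "j < n" "j \<noteq> i"
  shows "trans P i s j = 0"
proof -
  have "(\<Sum>k<n. trans P i s k) = trans P i s i + (\<Sum>k\<in>{..<n}-{i}. trans P i s k)"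
    using assms by (subst sum.remove[of _ i]) auto
  also have "\<dots> \<ge> 1 + trans P i s j"
    using assms by (auto simp: absorbing_def intro!: member_le_sum trans_nonneg)
  finally show ?thesis using trans_sum_1[of i s] trans_nonneg[of i j s] assms by simp
qed

lemma kernel_absorbing_other: "i < n \<Longrightarrow> absorbing P i \<Longrightarrow> j < n \<Longrightarrow> j \<noteq> i \<Longrightarrow> K \<theta> i j = 0"
  unfolding kernel_def by (simp add: trans_absorbing_other)

definition valid_stopping :: "(nat \<Rightarrow> theta \<Rightarrow> real) \<Rightarrow> theta \<Rightarrow> bool" where
  "valid_stopping \<rho> \<theta> \<longleftrightarrow> (\<forall>i<n. 0 \<le> \<rho> i \<theta> \<and> \<rho> i \<theta> \<le> 1)"

lemma valid_never_stop: "valid_stopping never_stop \<theta>"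
  by (simp add: valid_stopping_def)

lemma valid_strategy_stopping: "valid_strategy P \<sigma> \<Longrightarrow> valid_stopping \<sigma> \<theta>"
  by (simp add: valid_strategy_def valid_stopping_def)

lemma alive_nonneg: "valid_stopping \<rho> \<theta> \<Longrightarrow> j < n \<Longrightarrow> 0 \<le> alive \<pi> P \<rho> \<theta> t j"
proof (induction t arbitrary: j)
  case 0 then show ?case by (simp add: init_nonneg)
next
  case (Suc t) then show ?case
    by (auto simp: valid_stopping_def intro!: sum_nonneg mult_nonneg_nonneg kernel_nonneg)
qed

lemma alive_le_never_stop:
  "valid_stopping \<rho> \<theta> \<Longrightarrow> j < n \<Longrightarrow> alive \<pi> P \<rho> \<theta> t j \<le> alive \<pi> P never_stop \<theta> t j"
proof (induction t arbitrary: j)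
  case 0 then show ?case by simp
next
  case (Suc t)
  show ?case unfolding alive.simps
  proof (rule sum_mono)
    fix i assume i: "i \<in> {..<n}"
    have "alive \<pi> P \<rho> \<theta> t i * (1 - \<rho> i \<theta>) * K \<theta> i j \<le> alive \<pi> P \<rho> \<theta> t i * K \<theta> i j"
      using Suc.prems i alive_nonneg[of \<rho> \<theta> i t] kernel_nonneg[of i j \<theta>]
      by (auto simp: valid_stopping_def intro!: mult_right_mono mult_left_le)
    also have "\<dots> \<le> alive \<pi> P never_stop \<theta> t i * K \<theta> i j"
      using Suc i kernel_nonneg[of i j \<theta>] by (auto intro!: mult_right_mono)
    finally show "(if absorbing P i then 0 else alive \<pi> P \<rho> \<theta> t i * (1 - \<rho> i \<theta>) * K \<theta> i j)
        \<le> (if absorbing P i then 0 else alive \<pi> P never_stop \<theta> t i * (1 - 0) * K \<theta> i j)"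
      by simp
  qed
qed

lemma ends_nonneg: "valid_stopping \<rho> \<theta> \<Longrightarrow> i < n \<Longrightarrow> 0 \<le> ends \<pi> P \<rho> \<theta> t i"
  using alive_nonneg by (auto simp: ends_def valid_stopping_def)

lemma ends_le_alive: "valid_stopping \<rho> \<theta> \<Longrightarrow> i < n \<Longrightarrow> ends \<pi> P \<rho> \<theta> t i \<le> alive \<pi> P \<rho> \<theta> t i"
  using alive_nonneg[of \<rho> \<theta> i t] by (auto simp: ends_def valid_stopping_def intro: mult_left_le)

lemma alive_mass_Suc:
  "(\<Sum>j<n. alive \<pi> P \<rho> \<theta> (Suc t) j) = (\<Sum>i<n. alive \<pi> P \<rho> \<theta> t i) - (\<Sum>i<n. ends \<pi> P \<rho> \<theta> t i)"
proof -
  have "(\<Sum>j<n. alive \<pi> P \<rho> \<theta> (Suc t) j) =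
     (\<Sum>i<n. if absorbing P i then 0 else alive \<pi> P \<rho> \<theta> t i * (1 - \<rho> i \<theta>) * (\<Sum>j<n. K \<theta> i j))"
    unfolding alive.simps by (subst sum.swap) (auto simp: sum_distrib_left intro!: sum.cong)
  also have "\<dots> = (\<Sum>i<n. alive \<pi> P \<rho> \<theta> t i - ends \<pi> P \<rho> \<theta> t i)"
    by (rule sum.cong) (auto simp: kernel_sum_1 ends_def algebra_simps)
  finally show ?thesis by (simp add: sum_subtractf)
qed

lemma ends_alive_mass: "(\<Sum>s<t. \<Sum>i<n. ends \<pi> P \<rho> \<theta> s i) + (\<Sum>i<n. alive \<pi> P \<rho> \<theta> t i) = 1"
proof (induction t)
  case 0 then show ?case by (simp add: init_sum_1)
next
  case (Suc t) then show ?case using alive_mass_Suc[of \<rho> \<theta> t] by simp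
qed

lemma alive_cong:
  "(\<And>i. i < n \<Longrightarrow> \<rho> i \<theta> = \<rho>' i \<theta>) \<Longrightarrow> alive \<pi> P \<rho> \<theta> t j = alive \<pi> P \<rho>' \<theta> t j"
  by (induction t arbitrary: j) (auto intro!: sum.cong)

lemma prob_actH_cong:
  "(\<And>i. i < n \<Longrightarrow> \<rho> i \<theta> = \<rho>' i \<theta>) \<Longrightarrow> prob_actH \<pi> P \<rho> \<theta> = prob_actH \<pi> P \<rho>' \<theta>"
  unfolding prob_actH_def ends_def using alive_cong[of \<rho> \<theta> \<rho>'] by (auto intro!: suminf_cong sum.cong)

end

section \<open>Transient states are visited finitely often\<close>

fun evolve :: "(theta \<Rightarrow> 's::finite \<Rightarrow> real) \<Rightarrow> 's protocol \<Rightarrow> (nat \<Rightarrow> real) \<Rightarrow> theta \<Rightarrow> nat \<Rightarrow> nat \<Rightarrow> real"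
  where
  "evolve \<pi> P v \<theta> 0 j = v j"
| "evolve \<pi> P v \<theta> (Suc t) j = (\<Sum>k<nst P. evolve \<pi> P v \<theta> t k * kernel \<pi> P \<theta> k j)"

fun evolve_avoiding ::
  "(theta \<Rightarrow> 's::finite \<Rightarrow> real) \<Rightarrow> 's protocol \<Rightarrow> nat \<Rightarrow> (nat \<Rightarrow> real) \<Rightarrow> theta \<Rightarrow> nat \<Rightarrow> nat \<Rightarrow> real"
  where
  "evolve_avoiding \<pi> P i v \<theta> 0 j = v j"
| "evolve_avoiding \<pi> P i v \<theta> (Suc t) j =
     (\<Sum>k<nst P. if k = i then 0 else evolve_avoiding \<pi> P i v \<theta> t k * kernel \<pi> P \<theta> k j)"

definition point_mass :: "nat \<Rightarrow> nat \<Rightarrow> real" where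
  "point_mass i j = (if j = i then 1 else 0)"

lemma sum_convolution_swap:
  fixes a u :: "nat \<Rightarrow> 'a::comm_semiring_0"
  shows "(\<Sum>m<M. \<Sum>k\<le>m. a k * u (m - k)) = (\<Sum>k<M. a k * (\<Sum>d<M - k. u d))"
proof (induction M)
  case 0 then show ?case by simp
next
  case (Suc M)
  have "(\<Sum>k<Suc M. a k * (\<Sum>d<Suc M - k. u d)) = (\<Sum>k<M. a k * (\<Sum>d<Suc M - k. u d)) + a M * u 0"
    by simp
  also have "(\<Sum>k<M. a k * (\<Sum>d<Suc M - k. u d)) = (\<Sum>k<M. a k * (\<Sum>d<M - k. u d) + a k * u (M - k))"
    by (rule sum.cong) (auto simp: Suc_diff_le algebra_simps)
  also have "\<dots> = (\<Sum>k<M. a k * (\<Sum>d<M - k. u d)) + (\<Sum>k<M. a k * u (M - k))"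
    by (simp add: sum.distrib)
  finally have "(\<Sum>k<Suc M. a k * (\<Sum>d<Suc M - k. u d)) =
      (\<Sum>k<M. a k * (\<Sum>d<M - k. u d)) + (\<Sum>k\<le>M. a k * u (M - k))"
    by (simp add: lessThan_Suc_atMost[symmetric] add.assoc)
  then show ?case using Suc.IH by simp
qed

context protocol_chain
begin

lemma kernel_point_mass: "i < n \<Longrightarrow> (\<Sum>l<n. point_mass i l * K \<theta> l j) = K \<theta> i j"
  by (simp add: point_mass_def if_distrib[of "\<lambda>x. x * _"] cong: if_cong)

lemma evolve_Suc_shift: "evolve \<pi> P v \<theta> (Suc m) j = evolve \<pi> P (\<lambda>j. \<Sum>l<n. v l * K \<theta> l j) \<theta> m j"
  by (induction m arbitrary: j) auto

lemma evolve_first_entrance: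
  assumes i: "i < n"
  shows "evolve \<pi> P v \<theta> m j = evolve_avoiding \<pi> P i v \<theta> m j +
    (\<Sum>k<m. evolve_avoiding \<pi> P i v \<theta> k i * evolve \<pi> P (point_mass i) \<theta> (m - k) j)"
proof (induction m arbitrary: j)
  case 0 then show ?case by simp
next
  case (Suc m)
  have "evolve \<pi> P v \<theta> (Suc m) j = (\<Sum>l<n. evolve \<pi> P v \<theta> m l * K \<theta> l j)" by simp
  also have "\<dots> = (\<Sum>l<n. evolve_avoiding \<pi> P i v \<theta> m l * K \<theta> l j) +
      (\<Sum>l<n. \<Sum>k<m. evolve_avoiding \<pi> P i v \<theta> k i * (evolve \<pi> P (point_mass i) \<theta> (m - k) l * K \<theta> l j))"
    by (simp add: Suc.IH distrib_right sum.distrib sum_distrib_right mult.assoc)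
  also have "(\<Sum>l<n. \<Sum>k<m.
        evolve_avoiding \<pi> P i v \<theta> k i * (evolve \<pi> P (point_mass i) \<theta> (m - k) l * K \<theta> l j))
      = (\<Sum>k<m. evolve_avoiding \<pi> P i v \<theta> k i * evolve \<pi> P (point_mass i) \<theta> (Suc m - k) j)"
    by (subst sum.swap) (auto simp: sum_distrib_left Suc_diff_le intro!: sum.cong)
  also have "(\<Sum>l<n. evolve_avoiding \<pi> P i v \<theta> m l * K \<theta> l j) =
      evolve_avoiding \<pi> P i v \<theta> (Suc m) j + evolve_avoiding \<pi> P i v \<theta> m i * K \<theta> i j"
    using i by (simp add: sum.remove[of _ i] sum.If_cases Diff_eq Int_commute)
  also have "K \<theta> i j = evolve \<pi> P (point_mass i) \<theta> (Suc m - m) j"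
    using kernel_point_mass[OF i] by simp
  finally show ?case by simp
qed

lemma taboo_eq_evolve_avoiding: "taboo \<pi> P \<theta> i t j = evolve_avoiding \<pi> P i (K \<theta> i) \<theta> t j"
  by (induction t arbitrary: j) (simp_all cong: if_cong)

lemma evolve_nonneg: "(\<And>j. j < n \<Longrightarrow> 0 \<le> v j) \<Longrightarrow> j < n \<Longrightarrow> 0 \<le> evolve \<pi> P v \<theta> t j"
  by (induction t arbitrary: j) (auto intro!: sum_nonneg mult_nonneg_nonneg kernel_nonneg)

lemma evolve_avoiding_nonneg:
  "(\<And>j. j < n \<Longrightarrow> 0 \<le> v j) \<Longrightarrow> j < n \<Longrightarrow> 0 \<le> evolve_avoiding \<pi> P i v \<theta> t j"
  by (induction t arbitrary: j) (auto intro!: sum_nonneg mult_nonneg_nonneg kernel_nonneg)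

lemma evolve_avoiding_mass:
  assumes i: "i < n"
  shows "(\<Sum>t<M. evolve_avoiding \<pi> P i v \<theta> t i) + (\<Sum>j<n. evolve_avoiding \<pi> P i v \<theta> M j) = (\<Sum>j<n. v j)"
proof (induction M)
  case 0 then show ?case by simp
next
  case (Suc M)
  have "(\<Sum>j<n. evolve_avoiding \<pi> P i v \<theta> (Suc M) j) =
      (\<Sum>k<n. if k = i then 0 else evolve_avoiding \<pi> P i v \<theta> M k * (\<Sum>j<n. K \<theta> k j))"
    unfolding evolve_avoiding.simps by (subst sum.swap) (auto simp: sum_distrib_left intro!: sum.cong)
  also have "\<dots> = (\<Sum>k<n. evolve_avoiding \<pi> P i v \<theta> M k) - evolve_avoiding \<pi> P i v \<theta> M i"
    using i by (simp add: kernel_sum_1 sum.If_cases sum_diff1 Diff_eq[symmetric])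
  finally show ?case using Suc by simp
qed

lemma evolve_avoiding_returns_le:
  assumes i: "i < n" and v: "\<And>j. j < n \<Longrightarrow> 0 \<le> v j"
  shows "(\<Sum>t<M. evolve_avoiding \<pi> P i v \<theta> t i) \<le> (\<Sum>j<n. v j)"
  using evolve_avoiding_mass[OF i, where M=M and v=v and \<theta>=\<theta>]
    sum_nonneg[of "{..<n}" "evolve_avoiding \<pi> P i v \<theta> M"] evolve_avoiding_nonneg[OF v]
  by fastforce

lemma taboo_nonneg: "i < n \<Longrightarrow> j < n \<Longrightarrow> 0 \<le> taboo \<pi> P \<theta> i t j"
  unfolding taboo_eq_evolve_avoiding by (rule evolve_avoiding_nonneg) (auto simp: kernel_nonneg)

lemma taboo_summable:
  assumes i: "i < n"
  shows "summable (\<lambda>t. taboo \<pi> P \<theta> i t i)"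
proof (rule bounded_imp_summable)
  show "0 \<le> taboo \<pi> P \<theta> i t i" for t using taboo_nonneg i by simp
  show "(\<Sum>k\<le>t. taboo \<pi> P \<theta> i k i) \<le> 1" for t
    using evolve_avoiding_returns_le[OF i, where v="K \<theta> i" and M="Suc t" and \<theta>=\<theta>]
      kernel_sum_1[OF i, of \<theta>] kernel_nonneg[OF i]
    by (simp add: taboo_eq_evolve_avoiding lessThan_Suc_atMost)
qed

text \<open>Renewal argument: the expected number of visits to \<open>i\<close> from \<open>i\<close> satisfies \<open>u \<le> 1 + F u\<close>,
  where \<open>F\<close> is the return probability.\<close>

lemma visits_from_self_le:
  assumes i: "i < n" and transient: "return_prob \<pi> P \<theta> i < 1"
  shows "(\<Sum>m<M. evolve \<pi> P (point_mass i) \<theta> m i) \<le> 1 / (1 - return_prob \<pi> P \<theta> i)"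
proof -
  define F where "F = return_prob \<pi> P \<theta> i"
  define u where "u m = evolve \<pi> P (point_mass i) \<theta> m i" for m
  define f where "f k = taboo \<pi> P \<theta> i k i" for k
  have f_nonneg: "0 \<le> f k" for k using taboo_nonneg i f_def by simp
  have u_nonneg: "0 \<le> u m" for m unfolding u_def by (rule evolve_nonneg) (auto simp: point_mass_def i)
  have u0: "u 0 = 1" by (simp add: u_def point_mass_def)
  have f_sum: "(\<Sum>k<M. f k) \<le> F" for M
    unfolding F_def return_prob_def f_def
    by (rule sum_le_suminf) (use taboo_summable[OF i] taboo_nonneg[OF i i] in auto)
  have u_Suc: "u (Suc m) = (\<Sum>k\<le>m. f k * u (m - k))" for m
  proof -
    have "u (Suc m) = evolve \<pi> P (K \<theta> i) \<theta> m i"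
      unfolding u_def evolve_Suc_shift kernel_point_mass[OF i] ..
    also have "\<dots> = f m + (\<Sum>k<m. f k * u (m - k))"
      unfolding evolve_first_entrance[OF i, of "K \<theta> i" \<theta> m i] f_def u_def taboo_eq_evolve_avoiding
      by simp
    finally show ?thesis by (simp add: lessThan_Suc_atMost[symmetric] u0)
  qed
  have u_sum_mono: "(\<Sum>d<a. u d) \<le> (\<Sum>d<b. u d)" if "a \<le> b" for a b
    by (rule sum_mono2) (use that u_nonneg in auto)
  have "(\<Sum>m<Suc M. u m) \<le> 1 / (1 - F)" for M
  proof -
    have "(\<Sum>m<Suc M. u m) = 1 + (\<Sum>m<M. \<Sum>k\<le>m. f k * u (m - k))"
      by (simp only: sum.lessThan_Suc_shift u0 u_Suc)
    also have "\<dots> = 1 + (\<Sum>k<M. f k * (\<Sum>d<M - k. u d))" by (simp add: sum_convolution_swap)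
    also have "\<dots> \<le> 1 + (\<Sum>k<M. f k) * (\<Sum>d<Suc M. u d)"
      unfolding sum_distrib_right
      by (intro add_left_mono sum_mono mult_left_mono u_sum_mono f_nonneg) auto
    also have "\<dots> \<le> 1 + F * (\<Sum>d<Suc M. u d)"
      by (intro add_left_mono mult_right_mono f_sum sum_nonneg u_nonneg)
    finally have "(\<Sum>m<Suc M. u m) * (1 - F) \<le> 1" by (simp add: algebra_simps)
    then show ?thesis using transient F_def by (simp add: pos_le_divide_eq)
  qed
  moreover have "0 \<le> 1 / (1 - F)" using transient F_def by simp
  ultimately show ?thesis unfolding u_def[symmetric] F_def[symmetric] by (cases M) auto
qed

lemma visits_le:
  assumes i: "i < n" and transient: "return_prob \<pi> P \<theta> i < 1"
    and v_nonneg: "\<And>j. j < n \<Longrightarrow> 0 \<le> v j" and v_sum: "(\<Sum>j<n. v j) \<le> 1"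
  shows "(\<Sum>m<M. evolve \<pi> P v \<theta> m i) \<le> 1 + 1 / (1 - return_prob \<pi> P \<theta> i)"
proof -
  define B where "B = 1 / (1 - return_prob \<pi> P \<theta> i)"
  define u where "u m = evolve \<pi> P (point_mass i) \<theta> m i" for m
  define a where "a k = evolve_avoiding \<pi> P i v \<theta> k i" for k
  have a_nonneg: "0 \<le> a k" for k unfolding a_def by (rule evolve_avoiding_nonneg) (use v_nonneg i in auto)
  have u_nonneg: "0 \<le> u m" for m unfolding u_def by (rule evolve_nonneg) (auto simp: point_mass_def i)
  have a_sum: "(\<Sum>k<M. a k) \<le> 1" for M
    using evolve_avoiding_returns_le[OF i v_nonneg] v_sum unfolding a_def by (meson order_trans)
  have u_sum: "(\<Sum>d<N. u d) \<le> B" for N unfolding u_def B_def by (rule visits_from_self_le[OF i transient])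
  have "evolve \<pi> P v \<theta> m i \<le> a m + (\<Sum>k\<le>m. a k * u (m - k))" for m
  proof -
    have "(\<Sum>k<m. a k * u (m - k)) \<le> (\<Sum>k\<le>m. a k * u (m - k))"
      by (rule sum_mono2) (auto intro: mult_nonneg_nonneg a_nonneg u_nonneg)
    then show ?thesis unfolding evolve_first_entrance[OF i, of v \<theta> m i] a_def u_def by simp
  qed
  then have "(\<Sum>m<M. evolve \<pi> P v \<theta> m i) \<le> (\<Sum>m<M. a m) + (\<Sum>m<M. \<Sum>k\<le>m. a k * u (m - k))"
    by (simp add: sum.distrib[symmetric] sum_mono)
  also have "(\<Sum>m<M. \<Sum>k\<le>m. a k * u (m - k)) = (\<Sum>k<M. a k * (\<Sum>d<M - k. u d))"
    by (rule sum_convolution_swap)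
  also have "\<dots> \<le> (\<Sum>k<M. a k) * B"
    unfolding sum_distrib_right by (intro sum_mono mult_left_mono u_sum a_nonneg)
  also have "\<dots> \<le> B" using mult_right_mono[OF a_sum[of M], of B] u_sum[of 0] by simp
  finally show ?thesis using a_sum[of M] unfolding B_def by simp
qed

lemma alive_never_stop_eq_evolve:
  "j < n \<Longrightarrow> \<not> absorbing P j \<Longrightarrow> alive \<pi> P never_stop \<theta> t j = evolve \<pi> P (init P) \<theta> t j"
proof (induction t arbitrary: j)
  case 0 then show ?case by simp
next
  case (Suc t)
  have "(if absorbing P i then 0 else alive \<pi> P never_stop \<theta> t i * (1 - 0) * K \<theta> i j) =
      evolve \<pi> P (init P) \<theta> t i * K \<theta> i j" if i: "i < n" for i
    using Suc kernel_absorbing_other[OF i, of j \<theta>] i by (cases "i = j") auto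
  then show ?case by (auto intro: sum.cong)
qed

lemma alive_never_stop_summable:
  assumes j: "j < n" "\<not> absorbing P j" and transient: "return_prob \<pi> P \<theta> j < 1"
  shows "summable (\<lambda>t. alive \<pi> P never_stop \<theta> t j)"
proof (rule bounded_imp_summable)
  show "0 \<le> alive \<pi> P never_stop \<theta> t j" for t using alive_nonneg[OF valid_never_stop] j by simp
  show "(\<Sum>k\<le>t. alive \<pi> P never_stop \<theta> k j) \<le> 1 + 1 / (1 - return_prob \<pi> P \<theta> j)" for t
    using visits_le[OF j(1) transient, of "init P" "Suc t"] init_nonneg init_sum_1
      alive_never_stop_eq_evolve[OF j]
    by (simp add: lessThan_Suc_atMost)
qed

end

section \<open>Simple protocols end almost surely\<close>

locale simple_protocol_chain = protocol_chain +
  assumes simple: "simple \<pi> P"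
begin

lemma nonabsorbing_transient: "j < n \<Longrightarrow> \<not> absorbing P j \<Longrightarrow> return_prob \<pi> P \<theta> j < 1"
  using simple by (auto simp: simple_def transient_def)

lemma alive_mass_never_stop_summable: "summable (\<lambda>t. \<Sum>i<n. alive \<pi> P never_stop \<theta> t i)"
proof -
  have "summable (\<lambda>t. \<Sum>i<n. if absorbing P i then 0 else alive \<pi> P never_stop \<theta> t i)"
  proof (rule summable_sum)
    fix i assume "i \<in> {..<n}"
    then show "summable (\<lambda>t. if absorbing P i then 0 else alive \<pi> P never_stop \<theta> t i)"
      by (cases "absorbing P i") (auto intro: alive_never_stop_summable nonabsorbing_transient)
  qed
  moreover have "(\<Sum>i<n. alive \<pi> P never_stop \<theta> (Suc t) i) =
      (\<Sum>i<n. if absorbing P i then 0 else alive \<pi> P never_stop \<theta> t i)" for t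
    unfolding alive_mass_Suc by (simp add: sum_subtractf[symmetric] ends_def) (auto intro!: sum.cong)
  ultimately show ?thesis by (subst summable_Suc_iff[symmetric]) simp
qed

lemma ends_act_nonneg: "valid_stopping \<rho> \<theta> \<Longrightarrow> 0 \<le> (\<Sum>i<n. ends \<pi> P \<rho> \<theta> t i * act P i)"
  by (auto intro!: sum_nonneg mult_nonneg_nonneg ends_nonneg act_nonneg)

lemma ends_act_le_alive_never_stop:
  assumes \<rho>: "valid_stopping \<rho> \<theta>"
  shows "(\<Sum>i<n. ends \<pi> P \<rho> \<theta> t i * act P i) \<le> (\<Sum>i<n. alive \<pi> P never_stop \<theta> t i)"
proof (rule sum_mono)
  fix i assume i: "i \<in> {..<n}"
  have "ends \<pi> P \<rho> \<theta> t i * act P i \<le> ends \<pi> P \<rho> \<theta> t i"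
    using i ends_nonneg[OF \<rho>, of i t] act_le_1 by (auto intro: mult_left_le)
  also have "\<dots> \<le> alive \<pi> P never_stop \<theta> t i"
    using i ends_le_alive[OF \<rho>] alive_le_never_stop[OF \<rho>] by (meson lessThan_iff order_trans)
  finally show "ends \<pi> P \<rho> \<theta> t i * act P i \<le> alive \<pi> P never_stop \<theta> t i" .
qed

lemma prob_actH_summable:
  "valid_stopping \<rho> \<theta> \<Longrightarrow> summable (\<lambda>t. \<Sum>i<n. ends \<pi> P \<rho> \<theta> t i * act P i)"
  by (rule summable_comparison_test'[OF alive_mass_never_stop_summable[of \<theta>], of 0])
     (simp add: ends_act_nonneg ends_act_le_alive_never_stop)

lemma alive_tendsto_0:
  assumes \<rho>: "valid_stopping \<rho> \<theta>" and j: "j < n"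
  shows "(\<lambda>t. alive \<pi> P \<rho> \<theta> t j) \<longlonglongrightarrow> 0"
proof (rule Lim_null_comparison)
  have "norm (alive \<pi> P \<rho> \<theta> t j) \<le> alive \<pi> P never_stop \<theta> t j" for t
    using alive_nonneg[OF \<rho> j] alive_le_never_stop[OF \<rho> j] by simp
  also have "alive \<pi> P never_stop \<theta> t j \<le> (\<Sum>i<n. alive \<pi> P never_stop \<theta> t i)" for t
    by (rule member_le_sum) (use j alive_nonneg[OF valid_never_stop] in auto)
  finally show "\<forall>\<^sub>F t in sequentially. norm (alive \<pi> P \<rho> \<theta> t j) \<le> (\<Sum>i<n. alive \<pi> P never_stop \<theta> t i)"
    by simp
  show "(\<lambda>t. \<Sum>i<n. alive \<pi> P never_stop \<theta> t i) \<longlonglongrightarrow> 0"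
    by (rule summable_LIMSEQ_zero[OF alive_mass_never_stop_summable])
qed

lemma ends_sums_1:
  assumes \<rho>: "valid_stopping \<rho> \<theta>"
  shows "(\<lambda>t. \<Sum>i<n. ends \<pi> P \<rho> \<theta> t i) sums 1"
proof -
  have "(\<lambda>M. 1 - (\<Sum>i<n. alive \<pi> P \<rho> \<theta> M i)) \<longlonglongrightarrow> 1 - (\<Sum>i<n. 0)"
    by (intro tendsto_diff tendsto_const tendsto_sum alive_tendsto_0[OF \<rho>]) simp
  then show ?thesis
    unfolding sums_def using ends_alive_mass[where \<rho>=\<rho> and \<theta>=\<theta>] by (simp add: eq_diff_eq[symmetric])
qed

lemma prob_actL_eq:
  assumes \<rho>: "valid_stopping \<rho> \<theta>"
  shows "prob_actL \<pi> P \<rho> \<theta> = 1 - prob_actH \<pi> P \<rho> \<theta>"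
proof -
  have "prob_actL \<pi> P \<rho> \<theta> = (\<Sum>t. (\<Sum>i<n. ends \<pi> P \<rho> \<theta> t i) - (\<Sum>i<n. ends \<pi> P \<rho> \<theta> t i * act P i))"
    unfolding prob_actL_def by (simp add: algebra_simps sum_subtractf)
  also have "\<dots> = (\<Sum>t. \<Sum>i<n. ends \<pi> P \<rho> \<theta> t i) - prob_actH \<pi> P \<rho> \<theta>"
    unfolding prob_actH_def
    using sums_summable[OF ends_sums_1[OF \<rho>]] prob_actH_summable[OF \<rho>]
    by (rule suminf_diff[symmetric])
  finally show ?thesis using ends_sums_1[OF \<rho>] by (simp add: sums_iff)
qed

end

section \<open>Sender best responses\<close>

context protocol_chain
begin

lemma br_maximizes_each_type:
  assumes \<sigma>: "\<sigma> \<in> br p \<pi> P" and p: "0 < p" "p < 1" and \<rho>: "valid_stopping \<rho> \<theta>"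
  shows "prob_actH \<pi> P \<rho> \<theta> \<le> prob_actH \<pi> P \<sigma> \<theta>"
proof -
  define \<sigma>' where "\<sigma>' = (\<lambda>i \<theta>'. if \<theta>' = \<theta> then \<rho> i \<theta>' else \<sigma> i \<theta>')"
  have "valid_strategy P \<sigma>'"
    using \<sigma> \<rho> by (auto simp: br_def valid_strategy_def valid_stopping_def \<sigma>'_def)
  then have le: "US p \<pi> P \<sigma>' \<le> US p \<pi> P \<sigma>" using \<sigma> by (simp add: br_def)
  have "prob_actH \<pi> P \<sigma>' \<theta> = prob_actH \<pi> P \<rho> \<theta>" by (rule prob_actH_cong) (simp add: \<sigma>'_def)
  moreover have "\<theta>' \<noteq> \<theta> \<Longrightarrow> prob_actH \<pi> P \<sigma>' \<theta>' = prob_actH \<pi> P \<sigma> \<theta>'" for \<theta>'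
    by (rule prob_actH_cong) (simp add: \<sigma>'_def)
  ultimately show ?thesis using le p by (cases \<theta>) (auto simp: US_def)
qed

end

definition strategy_cube :: "(nat \<Rightarrow> theta \<Rightarrow> real) set" where
  "strategy_cube = {\<sigma>. \<forall>i \<theta>. \<sigma> i \<theta> \<in> {0..1}}"

lemma compact_strategy_cube: "compact strategy_cube"
proof -
  have "compact (PiE UNIV (\<lambda>_::theta. {0..1::real}))"
    using compactin_PiE[of "\<lambda>_. euclidean" UNIV "\<lambda>_::theta. {0..1::real}"]
    by (simp add: euclidean_product_topology)
  then have "compact (PiE UNIV (\<lambda>_::nat. PiE UNIV (\<lambda>_::theta. {0..1::real})))"
    using compactin_PiE[of "\<lambda>_. euclidean" UNIV "\<lambda>_::nat. PiE UNIV (\<lambda>_::theta. {0..1::real})"]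
    by (simp add: euclidean_product_topology)
  moreover have "PiE UNIV (\<lambda>_::nat. PiE UNIV (\<lambda>_::theta. {0..1::real})) = strategy_cube"
    by (auto simp: strategy_cube_def PiE_iff)
  ultimately show ?thesis by simp
qed

lemma continuous_on_strategy_coordinate: "continuous_on UNIV (\<lambda>\<sigma>::nat \<Rightarrow> theta \<Rightarrow> real. \<sigma> i \<theta>)"
  by (rule continuous_on_product_then_coordinatewise) simp

lemma continuous_on_alive: "continuous_on UNIV (\<lambda>\<sigma>. alive \<pi> P \<sigma> \<theta> t j)"
proof (induction t arbitrary: j)
  case 0 then show ?case by simp
next
  case (Suc t)
  have "continuous_on UNIV
      (\<lambda>\<sigma>. if absorbing P i then 0 else alive \<pi> P \<sigma> \<theta> t i * (1 - \<sigma> i \<theta>) * kernel \<pi> P \<theta> i j)" for i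
    by (cases "absorbing P i") (auto intro!: continuous_intros Suc.IH continuous_on_strategy_coordinate)
  then show ?case by (auto intro: continuous_on_sum)
qed

context simple_protocol_chain
begin

lemma continuous_on_prob_actH: "continuous_on strategy_cube (\<lambda>\<sigma>. prob_actH \<pi> P \<sigma> \<theta>)"
proof -
  have ends_cont: "continuous_on UNIV (\<lambda>\<sigma>. ends \<pi> P \<sigma> \<theta> t i * act P i)" for t i
    unfolding ends_def
    by (cases "absorbing P i")
       (auto intro!: continuous_intros continuous_on_alive continuous_on_strategy_coordinate)
  have valid: "\<sigma> \<in> strategy_cube \<Longrightarrow> valid_stopping \<sigma> \<theta>" for \<sigma>
    by (simp add: strategy_cube_def valid_stopping_def)
  have "uniform_limit strategy_cube (\<lambda>N \<sigma>. \<Sum>t<N. \<Sum>i<n. ends \<pi> P \<sigma> \<theta> t i * act P i)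
          (\<lambda>\<sigma>. \<Sum>t. \<Sum>i<n. ends \<pi> P \<sigma> \<theta> t i * act P i) sequentially"
    by (rule Weierstrass_m_test[OF _ alive_mass_never_stop_summable[of \<theta>]])
       (simp add: valid ends_act_nonneg ends_act_le_alive_never_stop)
  then show ?thesis unfolding prob_actH_def
    by (rule uniform_limit_theorem[rotated])
       (auto intro!: always_eventually continuous_on_sum continuous_on_subset[OF ends_cont])
qed

lemma br_nonempty: "\<exists>\<sigma>. \<sigma> \<in> br p \<pi> P"
proof -
  have "continuous_on strategy_cube (US p \<pi> P)"
    unfolding US_def[abs_def] by (intro continuous_intros continuous_on_prob_actH)
  moreover have "strategy_cube \<noteq> {}" by (auto simp: strategy_cube_def)
  ultimately obtain \<sigma> where \<sigma>: "\<sigma> \<in> strategy_cube"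
    and max: "\<And>\<sigma>'. \<sigma>' \<in> strategy_cube \<Longrightarrow> US p \<pi> P \<sigma>' \<le> US p \<pi> P \<sigma>"
    using continuous_attains_sup[OF compact_strategy_cube] by blast
  have "US p \<pi> P \<sigma>' \<le> US p \<pi> P \<sigma>" if \<sigma>': "valid_strategy P \<sigma>'" for \<sigma>'
  proof -
    define \<sigma>'' where "\<sigma>'' = (\<lambda>i \<theta>. if i < n then \<sigma>' i \<theta> else 0)"
    have "\<sigma>'' \<in> strategy_cube" using \<sigma>' by (auto simp: \<sigma>''_def strategy_cube_def valid_strategy_def)
    moreover have "US p \<pi> P \<sigma>' = US p \<pi> P \<sigma>''"
      unfolding US_def using prob_actH_cong[of \<sigma>' _ \<sigma>''] by (simp add: \<sigma>''_def)
    ultimately show ?thesis using max by simp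
  qed
  moreover have "valid_strategy P \<sigma>" using \<sigma> by (simp add: strategy_cube_def valid_strategy_def)
  ultimately show ?thesis by (auto simp: br_def)
qed

lemma some_br: "(SOME \<sigma>. \<sigma> \<in> br p \<pi> P) \<in> br p \<pi> P"
  using br_nonempty by (rule someI_ex)

lemma URP_eq:
  fixes p :: real
  defines "\<sigma> \<equiv> SOME \<sigma>. \<sigma> \<in> br p \<pi> P"
  shows "URP p \<pi> P = p * prob_actH \<pi> P \<sigma> H + (1 - p) * (1 - prob_actH \<pi> P \<sigma> L)"
proof -
  have "valid_stopping \<sigma> L" using some_br[of p] by (simp add: \<sigma>_def br_def valid_strategy_stopping)
  then show ?thesis by (simp add: URP_def UR_def prob_actL_eq flip: \<sigma>_def)
qed

end

section \<open>The parsimonious protocol\<close>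

text \<open>The lottery reproducing an action probability \<open>a\<close> moves to \<open>h\<close> with probability \<open>a\<close> and to
  \<open>l\<close> with probability \<open>1 - a\<close>; \<open>c i\<close> is the probability of diverting from \<open>i\<close> to the lottery
  reproducing \<open>act P i\<close>.\<close>

definition parsimonize :: "'s protocol \<Rightarrow> nat \<Rightarrow> nat \<Rightarrow> (nat \<Rightarrow> real) \<Rightarrow> 's protocol" where
  "parsimonize P h l c = P\<lparr>
     trans := (\<lambda>i s j. if i = h \<or> i = l then trans P i s j
       else if j = h then c i * act P i + (1 - c i) * (trans P i s h * act P h + trans P i s l * act P l)
       else if j = l then c i * (1 - act P i)
         + (1 - c i) * (trans P i s h * (1 - act P h) + trans P i s l * (1 - act P l))
       else (1 - c i) * trans P i s j),
     init := (\<lambda>j. if j = h then init P h * act P h + init P l * act P l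
       else if j = l then init P h * (1 - act P h) + init P l * (1 - act P l) else init P j),
     act := (\<lambda>j. if j = h then 1 else 0)\<rparr>"

lemma parsimonize_simps [simp]:
  "nst (parsimonize P h l c) = nst P"
  "act (parsimonize P h l c) j = (if j = h then 1 else 0)"
  by (simp_all add: parsimonize_def)

locale parsimonization = simple_protocol_chain +
  fixes h l :: nat and c :: "nat \<Rightarrow> real"
  assumes h: "h < n" and l: "l < n" and h_neq_l: "h \<noteq> l"
    and absorbing_states: "{i. i < n \<and> absorbing P i} = {h, l}"
    and c_nonneg: "\<And>i. i < n \<Longrightarrow> 0 \<le> c i" and c_le_1: "\<And>i. i < n \<Longrightarrow> c i \<le> 1"
begin

abbreviation "Q \<equiv> parsimonize P h l c"

lemma absorbing_iff: "i < n \<Longrightarrow> absorbing P i \<longleftrightarrow> i = h \<or> i = l"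
  using absorbing_states by blast

lemma trans_Q_absorbing: "i = h \<or> i = l \<Longrightarrow> trans Q i s j = trans P i s j"
  by (auto simp: parsimonize_def)

lemma trans_Q_other:
  "i \<noteq> h \<Longrightarrow> i \<noteq> l \<Longrightarrow> j \<noteq> h \<Longrightarrow> j \<noteq> l \<Longrightarrow> trans Q i s j = (1 - c i) * trans P i s j"
  by (auto simp: parsimonize_def)

lemma trans_Q_h: "i \<noteq> h \<Longrightarrow> i \<noteq> l \<Longrightarrow>
   trans Q i s h = c i * act P i + (1 - c i) * (trans P i s h * act P h + trans P i s l * act P l)"
  by (auto simp: parsimonize_def)

lemma trans_Q_l: "i \<noteq> h \<Longrightarrow> i \<noteq> l \<Longrightarrow>
   trans Q i s l = c i * (1 - act P i)
     + (1 - c i) * (trans P i s h * (1 - act P h) + trans P i s l * (1 - act P l))"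
  using h_neq_l by (auto simp: parsimonize_def)

lemma init_Q: "init Q j = (if j = h then init P h * act P h + init P l * act P l
    else if j = l then init P h * (1 - act P h) + init P l * (1 - act P l) else init P j)"
  by (simp add: parsimonize_def)

lemma sum_at_h_l: "(\<Sum>i<n. if i = h \<or> i = l then g i else 0) = g h + g l"
proof -
  have "(\<Sum>i<n. if i = h \<or> i = l then g i else 0) = sum g ({..<n} \<inter> {h, l})"
    by (simp add: sum.inter_restrict)
  also have "{..<n} \<inter> {h, l} = {h, l}" using h l by auto
  finally show ?thesis using h_neq_l by simp
qed

lemma sum_split_h_l: "(\<Sum>j<n. g j) = g h + g l + (\<Sum>j<n. if j = h \<or> j = l then 0 else g j)"
proof -
  have "(\<Sum>j<n. g j) = (\<Sum>j<n. (if j = h \<or> j = l then g j else 0) + (if j = h \<or> j = l then 0 else g j))"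
    by (rule sum.cong) auto
  then show ?thesis by (simp add: sum.distrib sum_at_h_l)
qed

lemma trans_Q_nonneg:
  assumes i: "i < n" and j: "j < n"
  shows "0 \<le> trans Q i s j"
proof (cases "i = h \<or> i = l")
  case True then show ?thesis using trans_Q_absorbing trans_nonneg i j by simp
next
  case False
  then have "i \<noteq> h" "i \<noteq> l" by auto
  moreover have "0 \<le> c i" "0 \<le> 1 - c i" using c_nonneg c_le_1 i by auto
  moreover have "0 \<le> act P k" "0 \<le> 1 - act P k" if "k < n" for k
    using act_nonneg act_le_1 that by auto
  moreover have "0 \<le> trans P i s k" if "k < n" for k using trans_nonneg i that by auto
  ultimately show ?thesis using h l i j h_neq_l
    by (cases "j = h"; cases "j = l")
       (auto simp: trans_Q_h trans_Q_l trans_Q_other intro!: add_nonneg_nonneg mult_nonneg_nonneg)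
qed

lemma trans_Q_sum_1:
  assumes i: "i < n"
  shows "(\<Sum>j<n. trans Q i s j) = 1"
proof (cases "i = h \<or> i = l")
  case True then show ?thesis using trans_Q_absorbing trans_sum_1 i by simp
next
  case False
  then have ne: "i \<noteq> h" "i \<noteq> l" by auto
  have "(\<Sum>j<n. if j = h \<or> j = l then 0 else trans Q i s j) =
      (1 - c i) * (\<Sum>j<n. if j = h \<or> j = l then 0 else trans P i s j)"
    unfolding sum_distrib_left by (rule sum.cong) (auto simp: trans_Q_other[OF ne])
  also have "(\<Sum>j<n. if j = h \<or> j = l then 0 else trans P i s j) = 1 - trans P i s h - trans P i s l"
    using sum_split_h_l[of "trans P i s"] trans_sum_1[OF i, of s] by linarith
  finally show ?thesis
    by (subst sum_split_h_l) (simp add: trans_Q_h[OF ne] trans_Q_l[OF ne] algebra_simps)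
qed

lemma valid_Q: "valid_protocol Q"
  unfolding valid_protocol_def parsimonize_simps
proof (intro conjI allI impI)
  have "0 \<le> act P k" "0 \<le> 1 - act P k" "0 \<le> init P k" if "k < n" for k
    using act_nonneg act_le_1 init_nonneg that by auto
  then show "0 \<le> init Q j" if "j < n" for j
    using h l that by (auto simp: init_Q intro!: add_nonneg_nonneg mult_nonneg_nonneg)
  have "(\<Sum>j<n. if j = h \<or> j = l then 0 else init Q j) = (\<Sum>j<n. if j = h \<or> j = l then 0 else init P j)"
    by (rule sum.cong) (auto simp: init_Q)
  also have "\<dots> = 1 - init P h - init P l"
    using sum_split_h_l[of "init P"] init_sum_1 by linarith
  finally show "(\<Sum>j<n. init Q j) = 1"
    using h_neq_l by (subst sum_split_h_l) (simp add: init_Q algebra_simps)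
qed (use nst_ge_1 trans_Q_nonneg trans_Q_sum_1 in auto)

sublocale Q: protocol_chain \<pi> Q
  by unfold_locales (auto simp: signal_nonneg signal_sum valid_Q)

lemma kernel_Q_absorbing: "i = h \<or> i = l \<Longrightarrow> kernel \<pi> Q \<theta> i j = K \<theta> i j"
  by (simp add: kernel_def trans_Q_absorbing)

lemma kernel_Q_other:
  "i \<noteq> h \<Longrightarrow> i \<noteq> l \<Longrightarrow> j \<noteq> h \<Longrightarrow> j \<noteq> l \<Longrightarrow> kernel \<pi> Q \<theta> i j = (1 - c i) * K \<theta> i j"
  by (simp add: kernel_def trans_Q_other sum_distrib_left algebra_simps)

lemma kernel_Q_h:
  assumes "i \<noteq> h" "i \<noteq> l"
  shows "kernel \<pi> Q \<theta> i h = c i * act P i + (1 - c i) * (K \<theta> i h * act P h + K \<theta> i l * act P l)"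
proof -
  have "kernel \<pi> Q \<theta> i h = (\<Sum>s\<in>UNIV. c i * act P i * \<pi> \<theta> s
      + ((1 - c i) * act P h) * (\<pi> \<theta> s * trans P i s h) + ((1 - c i) * act P l) * (\<pi> \<theta> s * trans P i s l))"
    unfolding kernel_def trans_Q_h[OF assms] by (rule sum.cong) (simp_all add: algebra_simps)
  then show ?thesis
    by (simp add: sum.distrib flip: sum_distrib_left) (simp add: signal_sum kernel_def algebra_simps)
qed

lemma kernel_Q_le:
  assumes k: "k < n" and j: "j < n" "\<not> absorbing P j"
  shows "kernel \<pi> Q \<theta> k j \<le> K \<theta> k j"
proof (cases "k = h \<or> k = l")
  case True then show ?thesis by (simp add: kernel_Q_absorbing)
next
  case False
  then show ?thesis using j k absorbing_iff c_nonneg[OF k] kernel_nonneg[OF k j(1), of \<theta>]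
    by (simp add: kernel_Q_other algebra_simps)
qed

lemma absorbing_Q_iff: "i < n \<Longrightarrow> absorbing Q i \<longleftrightarrow> absorbing P i"
proof
  assume i: "i < n"
  show "absorbing P i \<Longrightarrow> absorbing Q i"
    using i absorbing_iff trans_Q_absorbing by (auto simp: absorbing_def)
  assume absorbing_Q: "absorbing Q i"
  show "absorbing P i"
  proof (rule ccontr)
    assume "\<not> absorbing P i"
    then obtain s where s: "trans P i s i \<noteq> 1" and ne: "i \<noteq> h" "i \<noteq> l"
      using absorbing_iff i by (auto simp: absorbing_def)
    have "(1 - c i) * trans P i s i = 1"
      using absorbing_Q ne by (simp add: absorbing_def flip: trans_Q_other)
    moreover have "0 \<le> trans P i s i" "trans P i s i \<le> 1" "0 \<le> 1 - c i" "1 - c i \<le> 1"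
      using trans_nonneg trans_le_1 c_nonneg c_le_1 i by auto
    ultimately show False
      using s mult_left_le_one_le[of "trans P i s i" "1 - c i"] by linarith
  qed
qed

text \<open>Diverting mass to \<open>h\<close> and \<open>l\<close> can only shorten excursions through non-absorbing states.\<close>

lemma taboo_Q_le:
  assumes i: "i < n" and j: "j < n" "\<not> absorbing P j"
  shows "taboo \<pi> Q \<theta> i t j \<le> taboo \<pi> P \<theta> i t j"
  using j
proof (induction t arbitrary: j)
  case 0 then show ?case by (simp add: kernel_Q_le i)
next
  case (Suc t)
  have "taboo \<pi> Q \<theta> i t k * kernel \<pi> Q \<theta> k j \<le> taboo \<pi> P \<theta> i t k * K \<theta> k j" if k: "k < n" for k
  proof (cases "absorbing P k")
    case True
    then have "K \<theta> k j = 0" using Suc.prems k kernel_absorbing_other by auto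
    then have "kernel \<pi> Q \<theta> k j = 0"
      using kernel_Q_le[OF k Suc.prems, of \<theta>] Q.kernel_nonneg[of k j \<theta>] k Suc.prems by simp
    then show ?thesis using taboo_nonneg[OF i k] kernel_nonneg[OF k] Suc.prems by simp
  next
    case False
    then show ?thesis
      using Suc.IH[OF k False] kernel_Q_le[OF k Suc.prems] Q.taboo_nonneg[of i k \<theta> t]
        Q.kernel_nonneg[of k j \<theta>] i k Suc.prems by (auto intro: mult_mono order_trans)
  qed
  then show ?case by (auto intro!: sum_mono)
qed

lemma transient_Q:
  assumes i: "i < n" "\<not> absorbing P i"
  shows "return_prob \<pi> Q \<theta> i < 1"
proof -
  have le: "taboo \<pi> Q \<theta> i t i \<le> taboo \<pi> P \<theta> i t i" for t using taboo_Q_le i by simp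
  have "return_prob \<pi> Q \<theta> i \<le> return_prob \<pi> P \<theta> i"
    unfolding return_prob_def
    by (rule suminf_le[OF le Q.taboo_summable taboo_summable]) (use i in simp_all)
  also have "\<dots> < 1" using nonabsorbing_transient i by simp
  finally show ?thesis .
qed

lemma absorbing_states_Q: "{i. i < nst Q \<and> absorbing Q i} = {h, l}"
  using absorbing_states absorbing_Q_iff by auto

lemma simple_Q: "simple \<pi> Q"
  using absorbing_states_Q h_neq_l transient_Q absorbing_Q_iff
  by (auto simp: simple_def transient_def)

lemma parsimonious_Q: "parsimonious \<pi> Q"
  unfolding parsimonious_def
  using h l h_neq_l absorbing_states_Q absorbing_iff transient_Q
  by (intro exI[of _ h] exI[of _ l]) (auto simp: transient_def)

sublocale Q: simple_protocol_chain \<pi> Q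
  by unfold_locales (rule simple_Q)

end

section \<open>Comparison of the sender's behaviour in both protocols\<close>

context parsimonization
begin

text \<open>A strategy \<open>\<tau>\<close> in \<open>Q\<close> is mimicked in \<open>P\<close> by stopping whenever \<open>\<tau>\<close> stops or \<open>Q\<close> diverts.\<close>

definition stop_or_divert :: "(nat \<Rightarrow> theta \<Rightarrow> real) \<Rightarrow> nat \<Rightarrow> theta \<Rightarrow> real" where
  "stop_or_divert \<tau> i \<theta> = 1 - (1 - \<tau> i \<theta>) * (1 - c i)"

lemma one_minus_stop_or_divert: "1 - stop_or_divert \<tau> i \<theta> = (1 - \<tau> i \<theta>) * (1 - c i)"
  by (simp add: stop_or_divert_def)

lemma valid_stop_or_divert:
  assumes "valid_stopping \<tau> \<theta>"
  shows "valid_stopping (stop_or_divert \<tau>) \<theta>"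
  unfolding valid_stopping_def
proof (intro allI impI)
  fix i assume i: "i < n"
  have "0 \<le> 1 - \<tau> i \<theta>" "1 - \<tau> i \<theta> \<le> 1" "0 \<le> 1 - c i" "1 - c i \<le> 1"
    using assms c_nonneg[OF i] c_le_1[OF i] i by (auto simp: valid_stopping_def)
  then have "0 \<le> (1 - \<tau> i \<theta>) * (1 - c i)" "(1 - \<tau> i \<theta>) * (1 - c i) \<le> 1"
    by (auto intro: mult_le_one)
  then show "0 \<le> stop_or_divert \<tau> i \<theta> \<and> stop_or_divert \<tau> i \<theta> \<le> 1"
    by (simp add: stop_or_divert_def)
qed

lemma stop_or_divert_never_stop: "stop_or_divert never_stop i \<theta> = c i"
  by (simp add: stop_or_divert_def)

lemma alive_Q_eq:
  "j < n \<Longrightarrow> \<not> absorbing P j \<Longrightarrow> alive \<pi> Q \<tau> \<theta> t j = alive \<pi> P (stop_or_divert \<tau>) \<theta> t j"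
proof (induction t arbitrary: j)
  case 0 then show ?case by (simp add: init_Q absorbing_iff)
next
  case (Suc t)
  have "(if absorbing Q i then 0 else alive \<pi> Q \<tau> \<theta> t i * (1 - \<tau> i \<theta>) * kernel \<pi> Q \<theta> i j) =
      (if absorbing P i then 0
       else alive \<pi> P (stop_or_divert \<tau>) \<theta> t i * (1 - stop_or_divert \<tau> i \<theta>) * K \<theta> i j)"
    if i: "i < n" for i
    using Suc i absorbing_Q_iff[OF i] absorbing_iff[OF i] absorbing_iff[of j]
    by (auto simp: kernel_Q_other one_minus_stop_or_divert mult.assoc)
  then show ?case by (auto intro: sum.cong)
qed

definition absorbed_H :: "(nat \<Rightarrow> theta \<Rightarrow> real) \<Rightarrow> theta \<Rightarrow> nat \<Rightarrow> real" where
  "absorbed_H \<rho> \<theta> t = alive \<pi> P \<rho> \<theta> t h * act P h + alive \<pi> P \<rho> \<theta> t l * act P l"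

definition stopped_H :: "(nat \<Rightarrow> theta \<Rightarrow> real) \<Rightarrow> (nat \<Rightarrow> theta \<Rightarrow> real) \<Rightarrow> theta \<Rightarrow> nat \<Rightarrow> real" where
  "stopped_H \<rho> w \<theta> t = (\<Sum>i<n. if absorbing P i then 0 else alive \<pi> P \<rho> \<theta> t i * w i \<theta> * act P i)"

lemma ends_act_eq: "(\<Sum>i<n. ends \<pi> P \<rho> \<theta> t i * act P i) = stopped_H \<rho> \<rho> \<theta> t + absorbed_H \<rho> \<theta> t"
proof -
  have "(\<Sum>i<n. ends \<pi> P \<rho> \<theta> t i * act P i) =
      (\<Sum>i<n. (if i = h \<or> i = l then alive \<pi> P \<rho> \<theta> t i * act P i else 0)
        + (if absorbing P i then 0 else alive \<pi> P \<rho> \<theta> t i * \<rho> i \<theta> * act P i))"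
    by (rule sum.cong) (auto simp: ends_def absorbing_iff)
  then show ?thesis by (simp add: sum.distrib sum_at_h_l stopped_H_def absorbed_H_def)
qed

lemma ends_act_Q_eq: "(\<Sum>i<n. ends \<pi> Q \<tau> \<theta> t i * act Q i) = alive \<pi> Q \<tau> \<theta> t h"
proof -
  have "absorbing Q h" using absorbing_states_Q by auto
  then show ?thesis using h by (simp add: ends_def if_distrib[of "\<lambda>x. _ * x"] sum.delta cong: if_cong)
qed

lemma ends_act_Q_0: "(\<Sum>i<n. ends \<pi> Q \<tau> \<theta> 0 i * act Q i) = absorbed_H \<rho> \<theta> 0"
  by (subst ends_act_Q_eq) (simp add: init_Q absorbed_H_def)

text \<open>Mass diverted from a transient state at time \<open>t\<close> reaches \<open>h\<close> at time \<open>t + 1\<close>.\<close>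

lemma ends_act_Q_Suc:
  fixes \<tau> :: "nat \<Rightarrow> theta \<Rightarrow> real"
  defines "\<rho> \<equiv> stop_or_divert \<tau>"
  shows "(\<Sum>i<n. ends \<pi> Q \<tau> \<theta> (Suc t) i * act Q i) =
    stopped_H \<rho> \<rho> \<theta> t - stopped_H \<rho> \<tau> \<theta> t + absorbed_H \<rho> \<theta> (Suc t)"
proof -
  define b where "b i = (if absorbing P i then 0 else alive \<pi> P \<rho> \<theta> t i)" for i
  have "alive \<pi> Q \<tau> \<theta> (Suc t) h = (\<Sum>i<n. b i * \<rho> i \<theta> * act P i - b i * \<tau> i \<theta> * act P i
      + b i * (1 - \<rho> i \<theta>) * K \<theta> i h * act P h + b i * (1 - \<rho> i \<theta>) * K \<theta> i l * act P l)"
    unfolding alive.simps parsimonize_simps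
  proof (rule sum.cong[OF refl])
    fix i assume "i \<in> {..<n}"
    then show "(if absorbing Q i then 0 else alive \<pi> Q \<tau> \<theta> t i * (1 - \<tau> i \<theta>) * kernel \<pi> Q \<theta> i h) =
      b i * \<rho> i \<theta> * act P i - b i * \<tau> i \<theta> * act P i
      + b i * (1 - \<rho> i \<theta>) * K \<theta> i h * act P h + b i * (1 - \<rho> i \<theta>) * K \<theta> i l * act P l"
      by (cases "absorbing P i")
        (auto simp: b_def \<rho>_def absorbing_Q_iff alive_Q_eq kernel_Q_h absorbing_iff
          stop_or_divert_def algebra_simps)
  qed
  also have "\<dots> = stopped_H \<rho> \<rho> \<theta> t - stopped_H \<rho> \<tau> \<theta> t + absorbed_H \<rho> \<theta> (Suc t)"
    by (simp add: stopped_H_def absorbed_H_def b_def sum.distrib sum_subtractf sum_distrib_right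
        if_distrib[of "\<lambda>x. x * _"] cong: if_cong)
  finally show ?thesis by (simp only: ends_act_Q_eq)
qed

lemma stopped_H_nonneg:
  assumes "valid_stopping \<rho> \<theta>" "valid_stopping w \<theta>"
  shows "0 \<le> stopped_H \<rho> w \<theta> t"
  using assms alive_nonneg act_nonneg
  by (auto simp: stopped_H_def valid_stopping_def intro!: sum_nonneg mult_nonneg_nonneg)

lemma absorbed_H_nonneg: "valid_stopping \<rho> \<theta> \<Longrightarrow> 0 \<le> absorbed_H \<rho> \<theta> t"
  using alive_nonneg h l act_nonneg by (simp add: absorbed_H_def)

lemma summable_stopped_H_absorbed_H:
  assumes \<rho>: "valid_stopping \<rho> \<theta>"
  shows "summable (stopped_H \<rho> \<rho> \<theta>)" and "summable (absorbed_H \<rho> \<theta>)"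
proof -
  have XY: "summable (\<lambda>t. stopped_H \<rho> \<rho> \<theta> t + absorbed_H \<rho> \<theta> t)"
    using prob_actH_summable[OF \<rho>] by (simp add: ends_act_eq)
  show "summable (stopped_H \<rho> \<rho> \<theta>)" "summable (absorbed_H \<rho> \<theta>)"
    by (rule summable_comparison_test'[OF XY, of 0];
        use stopped_H_nonneg[OF \<rho> \<rho>] absorbed_H_nonneg[OF \<rho>] in simp)+
qed

lemma stopped_H_le_stop_or_divert:
  assumes \<tau>: "valid_stopping \<tau> \<theta>"
  shows "stopped_H (stop_or_divert \<tau>) \<tau> \<theta> t \<le> stopped_H (stop_or_divert \<tau>) (stop_or_divert \<tau>) \<theta> t"
  unfolding stopped_H_def
proof (rule sum_mono)
  fix i assume i: "i \<in> {..<n}"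
  have "stop_or_divert \<tau> i \<theta> - \<tau> i \<theta> = (1 - \<tau> i \<theta>) * c i"
    by (simp add: stop_or_divert_def algebra_simps)
  moreover have "0 \<le> (1 - \<tau> i \<theta>) * c i" using \<tau> c_nonneg i by (simp add: valid_stopping_def)
  ultimately have "\<tau> i \<theta> \<le> stop_or_divert \<tau> i \<theta>" by linarith
  then show "(if absorbing P i then 0 else alive \<pi> P (stop_or_divert \<tau>) \<theta> t i * \<tau> i \<theta> * act P i)
      \<le> (if absorbing P i then 0
         else alive \<pi> P (stop_or_divert \<tau>) \<theta> t i * stop_or_divert \<tau> i \<theta> * act P i)"
    using alive_nonneg[OF valid_stop_or_divert[OF \<tau>]] act_nonneg i
    by (auto intro!: mult_right_mono mult_left_mono)
qed

text \<open>Stopping in a transient state \<open>i\<close> yields action \<open>H\<close> with probability \<open>act P i\<close> in \<open>P\<close> but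
  never in \<open>Q\<close>; this is the only difference between \<open>\<tau>\<close> in \<open>Q\<close> and \<open>stop_or_divert \<tau>\<close> in \<open>P\<close>.\<close>

lemma stopped_H_sums_prob_actH_loss:
  assumes \<tau>: "valid_stopping \<tau> \<theta>"
  shows "stopped_H (stop_or_divert \<tau>) \<tau> \<theta> sums
    (prob_actH \<pi> P (stop_or_divert \<tau>) \<theta> - prob_actH \<pi> Q \<tau> \<theta>)"
proof -
  define \<rho> where "\<rho> = stop_or_divert \<tau>"
  have \<rho>: "valid_stopping \<rho> \<theta>" unfolding \<rho>_def by (rule valid_stop_or_divert[OF \<tau>])
  define X Y D where "X = stopped_H \<rho> \<rho> \<theta>" and "Y = absorbed_H \<rho> \<theta>" and "D = stopped_H \<rho> \<tau> \<theta>"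
  have sX: "summable X" and sY: "summable Y"
    unfolding X_def Y_def by (rule summable_stopped_H_absorbed_H[OF \<rho>])+
  have sD: "summable D"
    using stopped_H_nonneg[OF \<rho> \<tau>] stopped_H_le_stop_or_divert[OF \<tau>]
    by (intro summable_comparison_test'[OF sX, of 0]) (simp add: D_def X_def \<rho>_def)
  have "(\<lambda>t. X t - D t + Y (Suc t)) sums (suminf X - suminf D + (suminf Y - Y 0))"
    using summable_sums[OF sY]
    by (intro sums_add sums_diff summable_sums sX sD) (simp add: sums_Suc_iff)
  then have "(\<lambda>t. \<Sum>i<n. ends \<pi> Q \<tau> \<theta> (Suc t) i * act Q i) sums
      (suminf X - suminf D + (suminf Y - Y 0))"
    unfolding ends_act_Q_Suc X_def Y_def D_def \<rho>_def .
  from sums_Suc[OF this]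
  have "(\<lambda>t. \<Sum>i<n. ends \<pi> Q \<tau> \<theta> t i * act Q i) sums (suminf X + suminf Y - suminf D)"
    unfolding ends_act_Q_0[where \<rho> = \<rho>] Y_def by (simp add: algebra_simps)
  then have "prob_actH \<pi> Q \<tau> \<theta> = suminf X + suminf Y - suminf D"
    by (simp add: prob_actH_def sums_iff)
  moreover have "prob_actH \<pi> P \<rho> \<theta> = suminf X + suminf Y"
    unfolding prob_actH_def ends_act_eq X_def[symmetric] Y_def[symmetric]
    by (rule suminf_add[OF sX sY, symmetric])
  ultimately show ?thesis using summable_sums[OF sD] by (simp add: D_def \<rho>_def)
qed

lemma prob_actH_Q_le:
  assumes \<tau>: "valid_stopping \<tau> \<theta>"
  shows "prob_actH \<pi> Q \<tau> \<theta> \<le> prob_actH \<pi> P (stop_or_divert \<tau>) \<theta>"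
proof -
  have "0 \<le> prob_actH \<pi> P (stop_or_divert \<tau>) \<theta> - prob_actH \<pi> Q \<tau> \<theta>"
    using stopped_H_nonneg[OF valid_stop_or_divert[OF \<tau>] \<tau>]
    by (rule sums_le[OF _ sums_zero stopped_H_sums_prob_actH_loss[OF \<tau>]])
  then show ?thesis by simp
qed

lemma prob_actH_Q_never_stop:
  "prob_actH \<pi> Q never_stop \<theta> = prob_actH \<pi> P (stop_or_divert never_stop) \<theta>"
proof -
  have "stopped_H (stop_or_divert never_stop) never_stop \<theta> = (\<lambda>_. 0)"
    by (simp add: stopped_H_def fun_eq_iff cong: if_cong)
  then have "(\<lambda>_. 0) sums (prob_actH \<pi> P (stop_or_divert never_stop) \<theta> - prob_actH \<pi> Q never_stop \<theta>)"
    using stopped_H_sums_prob_actH_loss[OF valid_never_stop, where \<theta> = \<theta>] by simp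
  then show ?thesis using sums_unique2[OF _ sums_zero] by fastforce
qed

lemma URP_le_URP_Q:
  fixes p :: real
  defines "\<sigma> \<equiv> SOME \<sigma>. \<sigma> \<in> br p \<pi> P"
  assumes p: "0 < p" "p < 1" and c: "\<And>i. i < n \<Longrightarrow> c i = \<sigma> i H"
  shows "URP p \<pi> P \<le> URP p \<pi> Q"
proof -
  define \<sigma>' where "\<sigma>' = (SOME \<sigma>. \<sigma> \<in> br p \<pi> Q)"
  have \<sigma>: "\<sigma> \<in> br p \<pi> P" and \<sigma>': "\<sigma>' \<in> br p \<pi> Q"
    unfolding \<sigma>_def \<sigma>'_def by (rule some_br Q.some_br)+
  have "prob_actH \<pi> P \<sigma> H = prob_actH \<pi> Q never_stop H"
    using c by (simp add: prob_actH_Q_never_stop stop_or_divert_never_stop cong: prob_actH_cong)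
  also have "\<dots> \<le> prob_actH \<pi> Q \<sigma>' H"
    by (rule Q.br_maximizes_each_type[OF \<sigma>' p Q.valid_never_stop])
  finally have H: "prob_actH \<pi> P \<sigma> H \<le> prob_actH \<pi> Q \<sigma>' H" .
  have valid_\<sigma>': "valid_stopping \<sigma>' L"
    using \<sigma>' by (simp add: br_def valid_strategy_def valid_stopping_def)
  have "prob_actH \<pi> Q \<sigma>' L \<le> prob_actH \<pi> P (stop_or_divert \<sigma>') L"
    by (rule prob_actH_Q_le[OF valid_\<sigma>'])
  also have "\<dots> \<le> prob_actH \<pi> P \<sigma> L"
    by (rule br_maximizes_each_type[OF \<sigma> p valid_stop_or_divert[OF valid_\<sigma>']])
  finally have L: "prob_actH \<pi> Q \<sigma>' L \<le> prob_actH \<pi> P \<sigma> L" .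
  show ?thesis
    unfolding URP_eq Q.URP_eq \<sigma>_def[symmetric] \<sigma>'_def[symmetric]
    using H L p by (intro add_mono mult_left_mono) auto
qed

end

theorem proposition2:
  fixes p :: real and \<pi> :: "theta \<Rightarrow> 's::finite \<Rightarrow> real" and P :: "'s protocol"
  assumes "0 < p" "p < 1"
    and "\<And>\<theta> s. \<pi> \<theta> s > 0"
    and "\<And>\<theta>. (\<Sum>s\<in>UNIV. \<pi> \<theta> s) = 1"
    and "\<pi> H \<noteq> \<pi> L"
    and "valid_protocol P"
    and "simple \<pi> P"
    and "\<not> parsimonious \<pi> P"
  shows "\<exists>P' :: 's protocol. valid_protocol P' \<and> parsimonious \<pi> P' \<and> nst P' \<le> nst P \<and>
           URP p \<pi> P \<le> URP p \<pi> P'"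
proof -
  txt \<open>The construction works for every simple protocol.\<close>
  interpret simple_protocol_chain \<pi> P
    by unfold_locales (use assms(3,4,6,7) in \<open>auto intro: less_imp_le\<close>)
  obtain h l where hl: "{i. i < n \<and> absorbing P i} = {h, l}" "h \<noteq> l"
    using simple by (auto simp: simple_def card_2_iff)
  define \<sigma> where "\<sigma> = (SOME \<sigma>. \<sigma> \<in> br p \<pi> P)"
  have "valid_strategy P \<sigma>" using some_br by (simp add: \<sigma>_def br_def)
  then interpret parsimonization \<pi> P h l "\<lambda>i. \<sigma> i H"
    using hl by unfold_locales (auto simp: valid_strategy_def)
  show ?thesis
    using valid_Q parsimonious_Q URP_le_URP_Q[of p] assms(1,2) by (auto simp: \<sigma>_def)
qed

end
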